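(* The ring of integers $\mathbb Z$ has strong avoidance.
   Context: All rings are commutative with $1\neq 0$. A ring map $\phi:R\to S$ has avoidance if whenever $I,I_1,\ldots,I_n$ are ideals of $R$ with $I\subseteq\bigcup_{k=1}^n I_k$, then $IS\subseteq I_kS$ for some $k$. A ring $S$ has strong avoidance if every ring map $R\to S$ has avoidance. *)

theory Defs
  imports Main
begin

definition is_ideal :: "'a::comm_ring_1 set \<Rightarrow> bool" where
  "is_ideal I \<longleftrightarrow> 0 \<in> I \<and> (\<forall>x\<in>I. \<forall>y\<in>I. x + y \<in> I) \<and> (\<forall>r x. x \<in> I \<longrightarrow> r * x \<in> I)"

definition ideal_gen :: "'a::comm_ring_1 set \<Rightarrow> 'a set" where
  "ideal_gen A = \<Inter>{J. is_ideal J \<and> A \<subseteq> J}"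

definition is_ring_hom :: "('a::comm_ring_1 \<Rightarrow> 'b::comm_ring_1) \<Rightarrow> bool" where
  "is_ring_hom f \<longleftrightarrow> f 1 = 1 \<and> (\<forall>x y. f (x + y) = f x + f y) \<and> (\<forall>x y. f (x * y) = f x * f y)"

definition ext_ideal :: "('a::comm_ring_1 \<Rightarrow> 'b::comm_ring_1) \<Rightarrow> 'a set \<Rightarrow> 'b set" where
  "ext_ideal f I = ideal_gen (f ` I)"

definition has_avoidance :: "('a::comm_ring_1 \<Rightarrow> 'b::comm_ring_1) \<Rightarrow> bool" where
  "has_avoidance f \<longleftrightarrow>
    (\<forall>(I::'a set) (J::nat \<Rightarrow> 'a set) (n::nat).
       is_ideal I \<longrightarrow> (\<forall>k\<in>{1..n}. is_ideal (J k)) \<longrightarrow> I \<subseteq> (\<Union>k\<in>{1..n}. J k) \<longrightarrow>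
       (\<exists>k\<in>{1..n}. ext_ideal f I \<subseteq> ext_ideal f (J k)))"

end

theory Submission
  imports Defs
begin

text \<open>The image of an ideal under a ring map into \<open>\<int>\<close> is an ideal, because the
  image of the ring map contains every integer; ideals of \<open>\<int>\<close> are principal.
  So \<open>\<phi>(I)\<close> is generated by a single \<open>\<phi>(x)\<close> with \<open>x \<in> I\<close>, and that \<open>x\<close> lies in
  some \<open>I\<^sub>k\<close> of the cover, whence \<open>I\<int> = \<phi>(x)\<int> \<subseteq> I\<^sub>k\<int>\<close>.\<close>

lemma ideal_gen_subset: "A \<subseteq> ideal_gen A"
  unfolding ideal_gen_def by blast

lemma is_ideal_ideal_gen: "is_ideal (ideal_gen (A :: 'a::comm_ring_1 set))"
  unfolding ideal_gen_def is_ideal_def by blast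

lemma ideal_gen_least: "is_ideal J \<Longrightarrow> A \<subseteq> J \<Longrightarrow> ideal_gen A \<subseteq> J"
  unfolding ideal_gen_def by blast

lemma ideal_gen_subset_if_dvd:
  fixes A B :: "'a::comm_ring_1 set"
  assumes "x \<in> B" and "\<And>a. a \<in> A \<Longrightarrow> x dvd a"
  shows "ideal_gen A \<subseteq> ideal_gen B"
proof (rule ideal_gen_least[OF is_ideal_ideal_gen], rule subsetI)
  fix a assume "a \<in> A"
  then obtain r where "a = r * x"
    using assms(2) by (metis dvdE mult.commute)
  moreover have "x \<in> ideal_gen B"
    using assms(1) ideal_gen_subset by blast
  ultimately show "a \<in> ideal_gen B"
    using is_ideal_ideal_gen[of B] unfolding is_ideal_def by blast
qed

lemma ring_hom_zero: "is_ring_hom f \<Longrightarrow> f 0 = 0"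
  unfolding is_ring_hom_def by (metis add_cancel_right_right add_0)

lemma ring_hom_uminus: "is_ring_hom f \<Longrightarrow> f (- x) = - f x"
  using ring_hom_zero[of f] unfolding is_ring_hom_def
  by (metis add.right_inverse add_eq_0_iff)

lemma ring_hom_of_int:
  fixes f :: "'a::comm_ring_1 \<Rightarrow> 'b::comm_ring_1"
  assumes "is_ring_hom f"
  shows "f (of_int q) = of_int q"
proof (induction q rule: int_induct[where k = 0])
  case base
  show ?case using ring_hom_zero[OF assms] by simp
next
  case (step1 i)
  then show ?case using assms unfolding is_ring_hom_def by simp
next
  case (step2 i)
  have "f (of_int (i - 1)) = f (of_int i) + f (- 1)"
    using assms unfolding is_ring_hom_def by (metis diff_conv_add_uminus of_int_diff of_int_1)
  then show ?case
    using step2.IH ring_hom_uminus[OF assms, of 1] assms unfolding is_ring_hom_def by simp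
qed

lemma is_ideal_image_ring_hom_int:
  fixes \<phi> :: "'a::comm_ring_1 \<Rightarrow> int"
  assumes \<phi>: "is_ring_hom \<phi>" and I: "is_ideal I"
  shows "is_ideal (\<phi> ` I)"
  unfolding is_ideal_def
proof (intro conjI ballI allI impI)
  show "0 \<in> \<phi> ` I"
    using I ring_hom_zero[OF \<phi>] unfolding is_ideal_def by force
next
  fix u v assume "u \<in> \<phi> ` I" "v \<in> \<phi> ` I"
  then obtain a b where ab: "a \<in> I" "b \<in> I" and "u = \<phi> a" "v = \<phi> b" by blast
  then have "u + v = \<phi> (a + b)"
    using \<phi> unfolding is_ring_hom_def by simp
  moreover have "a + b \<in> I"
    using I ab unfolding is_ideal_def by blast
  ultimately show "u + v \<in> \<phi> ` I" by blast
next
  fix r u assume "u \<in> \<phi> ` I"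
  then obtain a where "a \<in> I" and "u = \<phi> a" by blast
  then have "r * u = \<phi> (of_int r * a)"
    using \<phi> ring_hom_of_int[OF \<phi>, of r] unfolding is_ring_hom_def by simp
  moreover have "of_int r * a \<in> I"
    using I \<open>a \<in> I\<close> unfolding is_ideal_def by blast
  ultimately show "r * u \<in> \<phi> ` I" by blast
qed

lemma int_ideal_principal:
  fixes J :: "int set"
  assumes J: "is_ideal J"
  obtains d where "d \<in> J" and "\<And>a. a \<in> J \<Longrightarrow> d dvd a"
proof (cases "J \<subseteq> {0}")
  case True
  moreover have "0 \<in> J"
    using J unfolding is_ideal_def by blast
  ultimately show ?thesis
    using that[of 0] by auto
next
  case False
  let ?P = "\<lambda>m::nat. m > 0 \<and> int m \<in> J"
  have "\<exists>m. ?P m"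
  proof -
    obtain a where a: "a \<in> J" "a \<noteq> 0" using False by blast
    moreover have "(- 1) * a \<in> J"
      using J a(1) unfolding is_ideal_def by blast
    ultimately have "\<bar>a\<bar> \<in> J"
      by (cases "a \<ge> 0") auto
    then have "?P (nat \<bar>a\<bar>)" using a(2) by simp
    then show ?thesis ..
  qed
  define m where "m = (LEAST m. ?P m)"
  have "?P m"
    unfolding m_def using \<open>\<exists>m. ?P m\<close> by (rule LeastI_ex)
  then have m_pos: "m > 0" and m_in: "int m \<in> J" by auto
  have minimal: "\<not> ?P k" if "k < m" for k
    using that unfolding m_def by (rule not_less_Least)
  show ?thesis
  proof (rule that[OF m_in])
    fix a assume "a \<in> J"
    then have "a + (- (a div int m)) * int m \<in> J"
      using J m_in unfolding is_ideal_def by blast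
    moreover have "a + (- (a div int m)) * int m = a mod int m"
      using minus_div_mult_eq_mod[of a "int m"] by simp
    moreover have "a mod int m \<ge> 0" and "a mod int m < int m"
      using m_pos by simp_all
    ultimately have "?P (nat (a mod int m)) \<longleftrightarrow> a mod int m \<noteq> 0"
      and "nat (a mod int m) < m"
      by auto
    with minimal have "a mod int m = 0" by blast
    then show "int m dvd a" by (simp add: dvd_eq_mod_eq_0)
  qed
qed

theorem mainTheorem18:
  fixes \<phi> :: "'a::comm_ring_1 \<Rightarrow> int"
  assumes "is_ring_hom \<phi>"
  shows "has_avoidance \<phi>"
  unfolding has_avoidance_def
proof (intro allI impI)
  fix I :: "'a set" and J :: "nat \<Rightarrow> 'a set" and n
  \<comment> \<open>The argument never needs the covering sets to be ideals.\<close>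
  assume "is_ideal I" and "\<forall>k\<in>{1..n}. is_ideal (J k)" and cover: "I \<subseteq> (\<Union>k\<in>{1..n}. J k)"
  obtain d where "d \<in> \<phi> ` I" and d_dvd: "\<And>b. b \<in> \<phi> ` I \<Longrightarrow> d dvd b"
    by (rule int_ideal_principal[OF is_ideal_image_ring_hom_int[OF assms \<open>is_ideal I\<close>]]) blast
  then obtain x where x: "x \<in> I" and "d = \<phi> x" by blast
  then have gen: "\<phi> x dvd \<phi> a" if "a \<in> I" for a
    using d_dvd that by blast
  from x cover obtain k where "k \<in> {1..n}" and "x \<in> J k" by blast
  moreover have "ext_ideal \<phi> I \<subseteq> ext_ideal \<phi> (J k)"
    unfolding ext_ideal_def
    using \<open>x \<in> J k\<close> gen by (intro ideal_gen_subset_if_dvd[of "\<phi> x"]) auto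
  ultimately show "\<exists>k\<in>{1..n}. ext_ideal \<phi> I \<subseteq> ext_ideal \<phi> (J k)" by blast
qed

end
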